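(* (Generalised Haldane relations.) Suppose the dynamic deficiency of the network is $0$, i.e. $\ker M=\ker\mathcal{L}(G)$. Let $G_1$ be a terminal strongly connected component of $G$, whose complexes (after reordering) are $C_1,\dots,C_k$, and let $\rho\in\ker\mathcal{L}(G)$ be a nonzero vector vanishing at all complexes outside $G_1$ (such a vector exists, is unique up to scaling, and has all entries $\rho_1,\dots,\rho_k$ nonzero). Then for every steady state $x$ and every $2\le i\le k$, \[x^{C_i}=\frac{\rho_i}{\rho_1}\,x^{C_1},\] these $k-1$ relations are type 1 complex-linear invariants on $C_1,\dots,C_k$, and they form a basis of $I_k$ (so $\dim I_k=k-1$).
   Context: Setup: species $S_1,\dots,S_n$, concentrations $x$, complexes $C_1,\dots,C_m\in\mathbb{Z}_{\ge0}^n$, reaction graph $G$ on complexes with positive edge labels $\kappa_{ij}$. Laplacian $\mathcal{L}(G)$: $\mathcal{L}(G)_{ji}=\kappa_{ij}$ for edges $C_i\to C_j$, other off-diagonal entries $0$, $\mathcal{L}(G)_{ii}=-\sum_j\kappa_{ij}$. $Y$ is the $n\times m$ matrix with columns $C_i$; $x^C=\prod_jx_j^{C(S_j)}$, $\Psi(x)=(x^{C_1},\dots,x^{C_m})^\top$; dynamics $dx/dt=Y\mathcal{L}(G)\Psi(x)$; $M=Y\mathcal{L}(G)$; steady state means $M\Psi(x)=0$. A strongly connected component (SCC) of $G$ is a maximal subgraph in which any two nodes are joined by directed paths in both directions; it is terminal if no edge leaves it. The dynamic deficiency is $\delta_D=\dim\ker M-\dim\ker\mathcal{L}(G)$. A type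 1 complex-linear invariant on $C_1,\dots,C_k$ is a polynomial $a_1x^{C_1}+\dots+a_kx^{C_k}$ with $(a_1,\dots,a_k,0,\dots,0)$ in the row span of $M$; $I_k$ is the space of these. *)

theory Defs
  imports "HOL-Analysis.Analysis"
begin

text \<open>Complexes are indexed by a finite type 'm, species by a
  finite type 'n.  C i s is the stoichiometric coefficient of species s in complex i.\<close>

definition laplacian :: "('m::finite \<times> 'm) set \<Rightarrow> ('m \<Rightarrow> 'm \<Rightarrow> real) \<Rightarrow> real^'m^'m" where
  "laplacian E kappa = (\<chi> j i.
     if i = j then - (\<Sum>l\<in>{l. (i, l) \<in> E \<and> l \<noteq> i}. kappa i l)
     else if (i, j) \<in> E then kappa i j else 0)"

definition complex_matrix :: "('m::finite \<Rightarrow> 'n::finite \<Rightarrow> nat) \<Rightarrow> real^'m^'n" where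
  "complex_matrix C = (\<chi> s i. real (C i s))"

definition Mmat :: "('m::finite \<Rightarrow> 'n::finite \<Rightarrow> nat) \<Rightarrow> ('m \<times> 'm) set \<Rightarrow> ('m \<Rightarrow> 'm \<Rightarrow> real) \<Rightarrow> real^'m^'n" where
  "Mmat C E kappa = complex_matrix C ** laplacian E kappa"

definition Psi :: "('m::finite \<Rightarrow> 'n::finite \<Rightarrow> nat) \<Rightarrow> real^'n \<Rightarrow> real^'m" where
  "Psi C x = (\<chi> i. \<Prod>s\<in>UNIV. (x $ s) ^ (C i s))"

definition matkernel :: "real^'a::finite^'b::finite \<Rightarrow> (real^'a) set" where
  "matkernel A = {v. A *v v = 0}"

definition rowspan :: "real^'a::finite^'b::finite \<Rightarrow> (real^'a) set" where
  "rowspan A = span (rows A)"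

definition is_steady_state :: "('m::finite \<Rightarrow> 'n::finite \<Rightarrow> nat) \<Rightarrow> ('m \<times> 'm) set \<Rightarrow> ('m \<Rightarrow> 'm \<Rightarrow> real) \<Rightarrow> real^'n \<Rightarrow> bool" where
  "is_steady_state C E kappa x \<longleftrightarrow> Mmat C E kappa *v Psi C x = 0"

definition dynamic_deficiency :: "('m::finite \<Rightarrow> 'n::finite \<Rightarrow> nat) \<Rightarrow> ('m \<times> 'm) set \<Rightarrow> ('m \<Rightarrow> 'm \<Rightarrow> real) \<Rightarrow> int" where
  "dynamic_deficiency C E kappa =
     int (dim (matkernel (Mmat C E kappa))) - int (dim (matkernel (laplacian E kappa)))"

definition is_scc :: "('m \<times> 'm) set \<Rightarrow> 'm set \<Rightarrow> bool" where
  "is_scc E S \<longleftrightarrow> S \<noteq> {} \<and> (\<forall>a\<in>S. \<forall>b\<in>S. (a, b) \<in> E\<^sup>*)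
     \<and> (\<forall>a\<in>S. \<forall>b. (a, b) \<in> E\<^sup>* \<and> (b, a) \<in> E\<^sup>* \<longrightarrow> b \<in> S)"

definition is_terminal_scc :: "('m \<times> 'm) set \<Rightarrow> 'm set \<Rightarrow> bool" where
  "is_terminal_scc E S \<longleftrightarrow> is_scc E S \<and> (\<forall>a\<in>S. \<forall>b. (a, b) \<in> E \<longrightarrow> b \<in> S)"

text \<open>Type 1 complex-linear invariants on the complexes in S, identified with their
  coefficient vectors: vectors supported on S lying in the row span of M.\<close>
definition type1_invariants :: "('m::finite \<Rightarrow> 'n::finite \<Rightarrow> nat) \<Rightarrow> ('m \<times> 'm) set \<Rightarrow> ('m \<Rightarrow> 'm \<Rightarrow> real) \<Rightarrow> 'm set \<Rightarrow> (real^'m) set" where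
  "type1_invariants C E kappa S = {a. (\<forall>j. j \<notin> S \<longrightarrow> a $ j = 0) \<and> a \<in> rowspan (Mmat C E kappa)}"

text \<open>Coefficient vector of the Haldane relation x^{C_i} - (rho_i/rho_1) x^{C_1}.\<close>
definition haldane_vec :: "real^'m::finite \<Rightarrow> 'm \<Rightarrow> 'm \<Rightarrow> real^'m" where
  "haldane_vec rho c1 i = axis i 1 - (rho $ i / rho $ c1) *\<^sub>R axis c1 1"

end

theory Submission
  imports Defs
begin

(* The graph-theoretic core is a mass-balance argument for vectors v in the kernel of the
   Laplacian: a set Z of nodes on which v does not vanish and which receives flux only from
   itself cannot lose flux along any edge, so it is closed under E.  From this we get that
   kernel vectors vanish on transient nodes leading into a terminal component S, that their
   support within S is either empty or all of S, and hence that on S every kernel vector is a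
   multiple of rho, which is nonzero on all of S.

   On the linear-algebra side, deficiency zero means ker M = ker L, and the row space of M is
   the orthogonal complement of ker M.  Together with the previous step this identifies the
   type 1 invariants on S as the vectors supported on S and orthogonal to rho.  The Haldane
   vectors form a basis of that space (a statement about rho alone), and the steady-state
   relations are the statement that Psi(x), lying in ker L, is proportional to rho on S. *)

section \<open>The Laplacian as inflow minus outflow\<close>

text \<open>Weight of the edge i \<rightarrow> j, ignoring self-loops (which do not enter the Laplacian).\<close>
definition edge_weight :: "('m \<times> 'm) set \<Rightarrow> ('m \<Rightarrow> 'm \<Rightarrow> real) \<Rightarrow> 'm \<Rightarrow> 'm \<Rightarrow> real" where
  "edge_weight E kappa i j = (if (i, j) \<in> E \<and> i \<noteq> j then kappa i j else 0)"

lemma laplacian_component: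
  fixes E :: "('m::finite \<times> 'm) set"
  shows "(laplacian E kappa *v v) $ j =
    (\<Sum>i\<in>UNIV. edge_weight E kappa i j * v $ i) - (\<Sum>l\<in>UNIV. edge_weight E kappa j l) * v $ j"
proof -
  let ?w = "edge_weight E kappa"
  have out: "(\<Sum>l\<in>{l. (j, l) \<in> E \<and> l \<noteq> j}. kappa j l) = (\<Sum>l\<in>UNIV. ?w j l)"
    unfolding edge_weight_def by (simp add: sum.If_cases Int_def conj_commute eq_commute)
  have "(laplacian E kappa *v v) $ j = (\<Sum>i\<in>UNIV. laplacian E kappa $ j $ i * v $ i)"
    by (simp add: matrix_vector_mult_def)
  also have "\<dots> = (\<Sum>i\<in>UNIV. ?w i j * v $ i + (if i = j then - (\<Sum>l\<in>UNIV. ?w j l) * v $ j else 0))"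
    by (rule sum.cong) (auto simp: laplacian_def edge_weight_def out)
  also have "\<dots> = (\<Sum>i\<in>UNIV. ?w i j * v $ i) - (\<Sum>l\<in>UNIV. ?w j l) * v $ j"
    by (simp add: sum.distrib)
  finally show ?thesis .
qed

section \<open>Supports of kernel vectors of the Laplacian\<close>

text \<open>Summing |v| times the balance equations
  over Z, an edge leaving Z would make the total outflow exceed the total inflow.\<close>
lemma kernel_support_closed:
  fixes E :: "('m::finite \<times> 'm) set" and v :: "real^'m"
  assumes kappa_pos: "\<And>i j. (i, j) \<in> E \<Longrightarrow> kappa i j > 0"
    and v_ker: "v \<in> matkernel (laplacian E kappa)"
    and v_nz: "\<And>j. j \<in> Z \<Longrightarrow> v $ j \<noteq> 0"
    and inflow: "\<And>i j. j \<in> Z \<Longrightarrow> (i, j) \<in> E \<Longrightarrow> i \<noteq> j \<Longrightarrow> v $ i \<noteq> 0 \<Longrightarrow> i \<in> Z"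
  shows "E `` Z \<subseteq> Z"
proof (rule ccontr)
  assume "\<not> E `` Z \<subseteq> Z"
  then obtain i l where i: "i \<in> Z" and il: "(i, l) \<in> E" and l: "l \<notin> Z" by blast
  let ?w = "edge_weight E kappa"
  define out where "out j = (\<Sum>l\<in>UNIV. ?w j l)" for j
  have w_nonneg: "?w a b \<ge> 0" for a b
    using kappa_pos by (simp add: edge_weight_def less_imp_le)
  have balance: "out j * v $ j = (\<Sum>a\<in>Z. ?w a j * v $ a)" if j: "j \<in> Z" for j
  proof -
    have "out j * v $ j = (\<Sum>a\<in>UNIV. ?w a j * v $ a)"
      using v_ker laplacian_component[of E kappa v j] by (simp add: matkernel_def out_def)
    also have "\<dots> = (\<Sum>a\<in>Z. ?w a j * v $ a)"
      by (rule sum.mono_neutral_right) (use inflow[OF j] in \<open>auto simp: edge_weight_def\<close>)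
    finally show ?thesis .
  qed
  have abs_balance: "out j * \<bar>v $ j\<bar> \<le> (\<Sum>a\<in>Z. ?w a j * \<bar>v $ a\<bar>)" if j: "j \<in> Z" for j
  proof -
    have "out j \<ge> 0" unfolding out_def by (rule sum_nonneg) (use w_nonneg in auto)
    then have "out j * \<bar>v $ j\<bar> = \<bar>out j * v $ j\<bar>" by (simp add: abs_mult)
    also have "\<dots> = \<bar>\<Sum>a\<in>Z. ?w a j * v $ a\<bar>" using balance[OF j] by simp
    also have "\<dots> \<le> (\<Sum>a\<in>Z. \<bar>?w a j * v $ a\<bar>)" by (rule sum_abs)
    also have "\<dots> = (\<Sum>a\<in>Z. ?w a j * \<bar>v $ a\<bar>)" using w_nonneg by (simp add: abs_mult)
    finally show ?thesis .
  qed
  have out_within: "(\<Sum>j\<in>Z. ?w a j) \<le> out a" for a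
    unfolding out_def by (rule sum_mono2) (use w_nonneg in auto)
  have out_i: "(\<Sum>j\<in>Z. ?w i j) < out i"
  proof -
    have "?w i l > 0" using l i il kappa_pos[OF il] unfolding edge_weight_def by auto
    then have "(\<Sum>j\<in>Z. ?w i j) < (\<Sum>j\<in>insert l Z. ?w i j)" using l by simp
    also have "\<dots> \<le> out i" unfolding out_def by (rule sum_mono2) (use w_nonneg in auto)
    finally show ?thesis .
  qed
  have "(\<Sum>j\<in>Z. out j * \<bar>v $ j\<bar>) \<le> (\<Sum>j\<in>Z. \<Sum>a\<in>Z. ?w a j * \<bar>v $ a\<bar>)"
    by (rule sum_mono) (rule abs_balance)
  also have "\<dots> = (\<Sum>a\<in>Z. \<bar>v $ a\<bar> * (\<Sum>j\<in>Z. ?w a j))"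
    by (subst sum.swap) (simp add: sum_distrib_left mult.commute)
  also have "\<dots> < (\<Sum>a\<in>Z. \<bar>v $ a\<bar> * out a)"
  proof (rule sum_strict_mono_ex1)
    show "\<forall>a\<in>Z. \<bar>v $ a\<bar> * (\<Sum>j\<in>Z. ?w a j) \<le> \<bar>v $ a\<bar> * out a"
      using out_within by (simp add: mult_left_mono)
    show "\<exists>a\<in>Z. \<bar>v $ a\<bar> * (\<Sum>j\<in>Z. ?w a j) < \<bar>v $ a\<bar> * out a"
      using i out_i v_nz[OF i] by (intro bexI[of _ i]) auto
  qed simp
  finally show False by (simp add: mult.commute)
qed

lemma terminal_scc_closed:
  assumes "is_terminal_scc E S" "a \<in> S" "(a, b) \<in> E" shows "b \<in> S"
  using assms unfolding is_terminal_scc_def by blast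

lemma terminal_scc_connected:
  assumes "is_terminal_scc E S" "a \<in> S" "b \<in> S" shows "(a, b) \<in> E\<^sup>*"
  using assms unfolding is_terminal_scc_def is_scc_def by blast

text \<open>Kernel vectors of L vanish at every node outside a terminal component S from which S
  is reachable: the nonzero such nodes would form a set without inflow from outside, so flux
  could not reach S from them.\<close>
lemma kernel_vanishes_upstream:
  fixes E :: "('m::finite \<times> 'm) set" and v :: "real^'m"
  assumes kappa_pos: "\<And>i j. (i, j) \<in> E \<Longrightarrow> kappa i j > 0"
    and terminal: "is_terminal_scc E S"
    and v_ker: "v \<in> matkernel (laplacian E kappa)"
    and i: "i \<notin> S" and path: "(i, s) \<in> E\<^sup>*" and s: "s \<in> S"
  shows "v $ i = 0"
proof (rule ccontr)
  assume vi: "v $ i \<noteq> 0"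
  define Z where "Z = {a. a \<notin> S \<and> (\<exists>s\<in>S. (a, s) \<in> E\<^sup>*) \<and> v $ a \<noteq> 0}"
  have "E `` Z \<subseteq> Z"
  proof (rule kernel_support_closed[OF kappa_pos v_ker])
    show "v $ j \<noteq> 0" if "j \<in> Z" for j using that by (simp add: Z_def)
    show "a \<in> Z" if "j \<in> Z" "(a, j) \<in> E" "v $ a \<noteq> 0" for a j
      using that terminal_scc_closed[OF terminal, of a j]
      by (auto simp: Z_def intro: converse_rtrancl_into_rtrancl)
  qed
  then have "E\<^sup>* `` Z = Z" by (rule Image_closed_trancl)
  moreover have "i \<in> Z" using i path s vi by (auto simp: Z_def)
  ultimately have "s \<in> Z" using path by blast
  then show False using s by (simp add: Z_def)
qed

lemma kernel_support_terminal_scc: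
  fixes E :: "('m::finite \<times> 'm) set" and v :: "real^'m"
  assumes kappa_pos: "\<And>i j. (i, j) \<in> E \<Longrightarrow> kappa i j > 0"
    and terminal: "is_terminal_scc E S"
    and v_ker: "v \<in> matkernel (laplacian E kappa)"
    and a: "a \<in> S" "v $ a \<noteq> 0" and k: "k \<in> S"
  shows "v $ k \<noteq> 0"
proof -
  define Z where "Z = {i. i \<in> S \<and> v $ i \<noteq> 0}"
  have "E `` Z \<subseteq> Z"
  proof (rule kernel_support_closed[OF kappa_pos v_ker])
    show "v $ j \<noteq> 0" if "j \<in> Z" for j using that by (simp add: Z_def)
    show "i \<in> Z" if "j \<in> Z" "(i, j) \<in> E" "v $ i \<noteq> 0" for i j
      using that kernel_vanishes_upstream[OF kappa_pos terminal v_ker, of i j]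
      by (auto simp: Z_def)
  qed
  then have "E\<^sup>* `` Z = Z" by (rule Image_closed_trancl)
  moreover have "a \<in> Z" using a by (simp add: Z_def)
  ultimately have "k \<in> Z" using terminal_scc_connected[OF terminal a(1) k] by blast
  then show ?thesis by (simp add: Z_def)
qed

lemma kernel_vector_nonzero_on_scc:
  fixes E :: "('m::finite \<times> 'm) set" and rho :: "real^'m"
  assumes kappa_pos: "\<And>i j. (i, j) \<in> E \<Longrightarrow> kappa i j > 0"
    and terminal: "is_terminal_scc E S"
    and rho_ker: "rho \<in> matkernel (laplacian E kappa)"
    and rho_nz: "rho \<noteq> 0"
    and rho_supp: "\<And>j. j \<notin> S \<Longrightarrow> rho $ j = 0"
    and k: "k \<in> S"
  shows "rho $ k \<noteq> 0"
proof -
  obtain a where a: "rho $ a \<noteq> 0" using rho_nz by (metis vec_eq_iff zero_index)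
  then have "a \<in> S" using rho_supp by blast
  then show ?thesis using kernel_support_terminal_scc[OF kappa_pos terminal rho_ker] a k by blast
qed

text \<open>On a terminal component every kernel vector of L is a multiple of rho: subtracting the
  right multiple of rho gives a kernel vector vanishing at c1, hence on all of S.\<close>
lemma kernel_proportional_on_scc:
  fixes E :: "('m::finite \<times> 'm) set" and rho v :: "real^'m"
  assumes kappa_pos: "\<And>i j. (i, j) \<in> E \<Longrightarrow> kappa i j > 0"
    and terminal: "is_terminal_scc E S"
    and c1: "c1 \<in> S"
    and rho_ker: "rho \<in> matkernel (laplacian E kappa)"
    and rho_c1: "rho $ c1 \<noteq> 0"
    and v_ker: "v \<in> matkernel (laplacian E kappa)"
    and k: "k \<in> S"
  shows "v $ k = (v $ c1 / rho $ c1) * rho $ k"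
proof -
  define w where "w = v - (v $ c1 / rho $ c1) *\<^sub>R rho"
  have w_ker: "w \<in> matkernel (laplacian E kappa)"
    using v_ker rho_ker by (simp add: w_def matkernel_def matrix_vector_mult_diff_distrib
        matrix_vector_mult_scaleR)
  have "w $ c1 = 0" using rho_c1 by (simp add: w_def)
  then have "w $ k = 0" using kernel_support_terminal_scc[OF kappa_pos terminal w_ker k] c1 by blast
  then show ?thesis by (simp add: w_def)
qed

section \<open>Kernels and row spaces\<close>

lemma subspace_matkernel: "subspace (matkernel (A :: real^'a::finite^'b::finite))"
  unfolding matkernel_def by (rule linear_subspace_kernel) (rule matrix_vector_mul_linear)

text \<open>Since M = Y L, ker L \<subseteq> ker M; deficiency zero says the dimensions agree, so they coincide.\<close>
lemma deficiency_zero_kernel: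
  assumes "dynamic_deficiency C E kappa = 0"
  shows "matkernel (Mmat C E kappa) = matkernel (laplacian E kappa)"
proof -
  have "matkernel (laplacian E kappa) \<subseteq> matkernel (Mmat C E kappa)"
    unfolding matkernel_def Mmat_def by (auto simp: matrix_vector_mul_assoc[symmetric])
  moreover have "dim (matkernel (Mmat C E kappa)) \<le> dim (matkernel (laplacian E kappa))"
    using assms unfolding dynamic_deficiency_def by simp
  ultimately show ?thesis
    using subspace_dim_equal[OF subspace_matkernel subspace_matkernel] by blast
qed

lemma rowspan_iff_orthogonal_kernel:
  fixes A :: "real^'a::finite^'b::finite"
  shows "a \<in> rowspan A \<longleftrightarrow> (\<forall>v\<in>matkernel A. a \<bullet> v = 0)"
proof
  have row_in_span: "A $ k \<in> span (rows A)" for k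
    by (auto simp: rows_def row_def vec_eq_iff intro!: span_base exI[of _ k])
  show "\<forall>v\<in>matkernel A. a \<bullet> v = 0" if a: "a \<in> rowspan A"
  proof
    fix v assume v: "v \<in> matkernel A"
    show "a \<bullet> v = 0"
    proof (rule span_induct[where P="\<lambda>a. a \<bullet> v = 0", OF a[unfolded rowspan_def]])
      show "subspace {a. a \<bullet> v = 0}" by (auto simp: subspace_def inner_add_left)
      fix x assume "x \<in> rows A"
      then obtain k where "x = A $ k" by (auto simp: rows_def row_def vec_eq_iff)
      then show "x \<bullet> v = 0"
        using v by (simp add: matkernel_def matrix_vector_mul_component[symmetric])
    qed
  qed
  assume orth: "\<forall>v\<in>matkernel A. a \<bullet> v = 0"
  obtain y z where y: "y \<in> span (rows A)" and z: "\<And>w. w \<in> span (rows A) \<Longrightarrow> orthogonal z w"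
    and a: "a = y + z"
    using orthogonal_subspace_decomp_exists[of "rows A" a] by metis
  have "z \<in> matkernel A"
    using z[OF row_in_span]
    by (simp add: matkernel_def vec_eq_iff matrix_vector_mul_component orthogonal_def inner_commute)
  then have "a \<bullet> z = 0" using orth by blast
  moreover have "y \<bullet> z = 0" using z[OF y] by (simp add: orthogonal_def inner_commute)
  ultimately have "z \<bullet> z = 0" using a by (simp add: inner_add_left)
  then show "a \<in> rowspan A" using a y by (simp add: rowspan_def)
qed

section \<open>Type 1 invariants and Haldane vectors\<close>

text \<open>Under deficiency zero, the type 1 invariants on a terminal component S are exactly the
  vectors supported on S and orthogonal to rho: for a supported on S and v \<in> ker L, the
  proportionality of v to rho on S gives a \<bullet> v = (v c1 / rho c1) (a \<bullet> rho).\<close>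
lemma type1_invariants_orthogonal_rho:
  fixes E :: "('m::finite \<times> 'm) set" and rho :: "real^'m"
  assumes kappa_pos: "\<And>i j. (i, j) \<in> E \<Longrightarrow> kappa i j > 0"
    and deficiency0: "dynamic_deficiency C E kappa = 0"
    and terminal: "is_terminal_scc E S"
    and c1: "c1 \<in> S"
    and rho_ker: "rho \<in> matkernel (laplacian E kappa)"
    and rho_c1: "rho $ c1 \<noteq> 0"
  shows "type1_invariants C E kappa S = {a. (\<forall>j. j \<notin> S \<longrightarrow> a $ j = 0) \<and> a \<bullet> rho = 0}"
proof -
  have "(\<forall>v\<in>matkernel (laplacian E kappa). a \<bullet> v = 0) \<longleftrightarrow> a \<bullet> rho = 0"
    if supp: "\<forall>j. j \<notin> S \<longrightarrow> a $ j = 0" for a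
  proof
    assume "a \<bullet> rho = 0"
    moreover have "a \<bullet> v = (v $ c1 / rho $ c1) * (a \<bullet> rho)"
      if v: "v \<in> matkernel (laplacian E kappa)" for v
    proof -
      have "a $ j * v $ j = (v $ c1 / rho $ c1) * (a $ j * rho $ j)" for j
        using supp kernel_proportional_on_scc[OF kappa_pos terminal c1 rho_ker rho_c1 v, of j]
        by (cases "j \<in> S") auto
      then show ?thesis by (simp add: inner_vec_def sum_distrib_left)
    qed
    ultimately show "\<forall>v\<in>matkernel (laplacian E kappa). a \<bullet> v = 0" by simp
  qed (use rho_ker in blast)
  then show ?thesis
    by (auto simp: type1_invariants_def rowspan_iff_orthogonal_kernel
        deficiency_zero_kernel[OF deficiency0])
qed

lemma haldane_vec_component:
  "haldane_vec rho c1 i $ j = (if j = i then 1 else 0) - (rho $ i / rho $ c1) * (if j = c1 then 1 else 0)"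
  by (simp add: haldane_vec_def axis_def)

lemma haldane_vec_inner: "haldane_vec rho c1 i \<bullet> v = v $ i - (rho $ i / rho $ c1) * v $ c1"
  by (simp add: haldane_vec_def inner_diff_left inner_axis')

lemma haldane_combination_component:
  assumes "j \<in> S - {c1}"
  shows "(\<Sum>i\<in>S - {c1}. u i *\<^sub>R haldane_vec rho c1 i) $ j = u j"
proof -
  have "(\<Sum>i\<in>S - {c1}. u i *\<^sub>R haldane_vec rho c1 i) $ j
      = (\<Sum>i\<in>S - {c1}. u i * (if j = i then 1 else 0))"
    using assms by (simp add: haldane_vec_component)
  also have "\<dots> = (\<Sum>i\<in>S - {c1}. if j = i then u j else 0)" by (rule sum.cong) auto
  also have "\<dots> = u j" using assms by simp
  finally show ?thesis .
qed

lemma haldane_basis: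
  fixes rho :: "real^'m::finite"
  assumes c1: "c1 \<in> S" and rho_c1: "rho $ c1 \<noteq> 0"
  defines "H \<equiv> {a. (\<forall>j. j \<notin> S \<longrightarrow> a $ j = 0) \<and> a \<bullet> rho = 0}"
  shows "haldane_vec rho c1 ` (S - {c1}) \<subseteq> H"
    and "inj_on (haldane_vec rho c1) (S - {c1})"
    and "independent (haldane_vec rho c1 ` (S - {c1}))"
    and "span (haldane_vec rho c1 ` (S - {c1})) = H"
proof -
  let ?h = "haldane_vec rho c1"
  show in_H: "?h ` (S - {c1}) \<subseteq> H"
    using c1 rho_c1 by (auto simp: H_def haldane_vec_component haldane_vec_inner)
  show inj: "inj_on ?h (S - {c1})"
  proof
    fix i j assume "i \<in> S - {c1}" "j \<in> S - {c1}" "?h i = ?h j"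
    then have "?h i $ i = ?h j $ i" by simp
    then show "i = j" using \<open>i \<in> S - {c1}\<close> by (auto simp: haldane_vec_component split: if_splits)
  qed
  show "independent (?h ` (S - {c1}))"
  proof
    assume "dependent (?h ` (S - {c1}))"
    then obtain u where u: "\<exists>w\<in>?h ` (S - {c1}). u w \<noteq> 0"
      and zero: "(\<Sum>w\<in>?h ` (S - {c1}). u w *\<^sub>R w) = 0"
      using dependent_finite[of "?h ` (S - {c1})"] by auto
    from u obtain j where j: "j \<in> S - {c1}" "u (?h j) \<noteq> 0" by blast
    have "(\<Sum>i\<in>S - {c1}. u (?h i) *\<^sub>R ?h i) = 0" using zero by (simp add: sum.reindex[OF inj])
    then show False
      using haldane_combination_component[OF j(1), where rho=rho and u="\<lambda>i. u (?h i)"] j(2)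
      by simp
  qed
  have H_subspace: "subspace H" by (auto simp: subspace_def H_def inner_add_left)
  show "span (?h ` (S - {c1})) = H"
  proof
    show "span (?h ` (S - {c1})) \<subseteq> H" using in_H H_subspace by (rule span_minimal)
    show "H \<subseteq> span (?h ` (S - {c1}))"
    proof
      fix a assume a: "a \<in> H"
      define s where "s = (\<Sum>i\<in>S - {c1}. a $ i *\<^sub>R ?h i)"
      have s_span: "s \<in> span (?h ` (S - {c1}))"
        unfolding s_def by (intro span_sum span_mul span_base) auto
      then have "s \<in> H" using \<open>span (?h ` (S - {c1})) \<subseteq> H\<close> by blast
      define b where "b = a - s"
      have b_H: "b \<in> H" using a \<open>s \<in> H\<close> H_subspace by (simp add: b_def subspace_diff)
      text \<open>b vanishes off c1, so b \<bullet> rho = b c1 * rho c1 forces b = 0.\<close>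
      have b_off_c1: "b $ j = 0" if "j \<noteq> c1" for j
      proof (cases "j \<in> S")
        case True
        then show ?thesis
          using that haldane_combination_component[where j=j and rho=rho and u="\<lambda>i. a $ i"]
          by (simp add: b_def s_def)
      next
        case False
        then show ?thesis using a \<open>s \<in> H\<close> by (simp add: b_def H_def)
      qed
      have "b \<bullet> rho = (\<Sum>j\<in>UNIV. if j = c1 then b $ c1 * rho $ c1 else 0)"
        unfolding inner_vec_def by (rule sum.cong) (auto simp: b_off_c1)
      then have "b \<bullet> rho = b $ c1 * rho $ c1" by simp
      then have "b $ c1 = 0" using b_H rho_c1 by (simp add: H_def)
      then have "b = 0" using b_off_c1 by (metis vec_eq_iff zero_index)
      then show "a \<in> span (?h ` (S - {c1}))" using s_span by (simp add: b_def)
    qed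
  qed
qed

text \<open>Haldane relations at steady state: under deficiency zero Psi(x) lies in ker L, hence is
  proportional to rho on S.\<close>
lemma steady_state_haldane_relation:
  fixes E :: "('m::finite \<times> 'm) set" and rho :: "real^'m"
  assumes kappa_pos: "\<And>i j. (i, j) \<in> E \<Longrightarrow> kappa i j > 0"
    and deficiency0: "dynamic_deficiency C E kappa = 0"
    and terminal: "is_terminal_scc E S"
    and c1: "c1 \<in> S"
    and rho_ker: "rho \<in> matkernel (laplacian E kappa)"
    and rho_c1: "rho $ c1 \<noteq> 0"
    and steady: "is_steady_state C E kappa x"
    and i: "i \<in> S"
  shows "Psi C x $ i = (rho $ i / rho $ c1) * Psi C x $ c1"
proof -
  have "Psi C x \<in> matkernel (laplacian E kappa)"
    using steady deficiency_zero_kernel[OF deficiency0]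
    by (auto simp: is_steady_state_def matkernel_def)
  from kernel_proportional_on_scc[OF kappa_pos terminal c1 rho_ker rho_c1 this i]
  show ?thesis by simp
qed

theorem mainTheorem3:
  fixes C :: "'m::finite \<Rightarrow> 'n::finite \<Rightarrow> nat"
    and E :: "('m \<times> 'm) set"
    and kappa :: "'m \<Rightarrow> 'm \<Rightarrow> real"
    and S :: "'m set" and c1 :: 'm and rho :: "real^'m"
  assumes kappa_pos: "\<And>i j. (i, j) \<in> E \<Longrightarrow> kappa i j > 0"
    and deficiency0: "dynamic_deficiency C E kappa = 0"
    and terminal: "is_terminal_scc E S"
    and c1: "c1 \<in> S"
    and rho_ker: "rho \<in> matkernel (laplacian E kappa)"
    and rho_nz: "rho \<noteq> 0"
    and rho_supp: "\<And>j. j \<notin> S \<Longrightarrow> rho $ j = 0"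
  shows "(\<forall>i\<in>S. rho $ i \<noteq> 0)
    \<and> (\<forall>x. (\<forall>s. 0 \<le> x $ s) \<longrightarrow> is_steady_state C E kappa x \<longrightarrow>
          (\<forall>i\<in>S - {c1}. Psi C x $ i = (rho $ i / rho $ c1) * Psi C x $ c1))
    \<and> (\<forall>i\<in>S - {c1}. haldane_vec rho c1 i \<in> type1_invariants C E kappa S)
    \<and> inj_on (haldane_vec rho c1) (S - {c1})
    \<and> independent (haldane_vec rho c1 ` (S - {c1}))
    \<and> span (haldane_vec rho c1 ` (S - {c1})) = type1_invariants C E kappa S
    \<and> dim (type1_invariants C E kappa S) = card S - 1"
proof -
  have rho_S: "\<forall>i\<in>S. rho $ i \<noteq> 0"
    using kernel_vector_nonzero_on_scc[OF kappa_pos terminal rho_ker rho_nz rho_supp] by blast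
  then have rho_c1: "rho $ c1 \<noteq> 0" using c1 by blast
  let ?h = "haldane_vec rho c1" and ?T = "type1_invariants C E kappa S"
  have T_eq: "?T = {a. (\<forall>j. j \<notin> S \<longrightarrow> a $ j = 0) \<and> a \<bullet> rho = 0}"
    by (rule type1_invariants_orthogonal_rho[OF kappa_pos deficiency0 terminal c1 rho_ker rho_c1])
  note basis = haldane_basis[OF c1 rho_c1]
  have in_T: "\<forall>i\<in>S - {c1}. ?h i \<in> ?T" using basis(1) T_eq by blast
  have span: "span (?h ` (S - {c1})) = ?T" using basis(4) T_eq by simp
  have "dim ?T = card (?h ` (S - {c1}))"
    using basis(3) span dim_span_eq_card_independent by metis
  also have "\<dots> = card S - 1" using c1 by (simp add: card_image[OF basis(2)])
  finally have dim: "dim ?T = card S - 1" .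
  have steady: "\<forall>x. (\<forall>s. 0 \<le> x $ s) \<longrightarrow> is_steady_state C E kappa x \<longrightarrow>
      (\<forall>i\<in>S - {c1}. Psi C x $ i = (rho $ i / rho $ c1) * Psi C x $ c1)"
    using steady_state_haldane_relation[OF kappa_pos deficiency0 terminal c1 rho_ker rho_c1] by blast
  show ?thesis using rho_S steady in_T basis(2,3) span dim by (intro conjI)
qed

end
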